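(* Let $S\subset\mathbb{R}^n$ be porous in $\mathbb{R}^n$ and let $1\le p<\infty$. Then there is a constant $c$ (independent of $x$ and $r$) such that for every $x\in S$ and every $0<r\le 1$, \[ \int_{B^n(x,r)}\left|\log\frac{1}{\operatorname{dist}(y,S)}\right|^p\,dy\le c\,r^n\left(1+\log^p\frac1r\right). \]
   Context: A set $S\subset\mathbb{R}^n$ is porous in $\mathbb{R}^n$ if there is $\kappa\in(0,1]$ such that for every $x\in\mathbb{R}^n$ and every $0<r\le1$ there is $y\in B^n(x,r)$ with $B^n(y,\kappa r)\cap S=\emptyset$. $B^n(x,r)$ is the open ball of radius $r$ centered at $x$. *)

theory Defs
  imports "HOL-Analysis.Analysis"
begin

definition porous :: "'a::euclidean_space set \<Rightarrow> bool" where
  "porous S \<longleftrightarrow> (\<exists>\<kappa>::real. 0 < \<kappa> \<and> \<kappa> \<le> 1 \<and>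
     (\<forall>x r. 0 < r \<and> r \<le> 1 \<longrightarrow> (\<exists>y\<in>ball x r. ball y (\<kappa> * r) \<inter> S = {})))"

end

theory Submission
  imports Defs
begin

(* Let S be porous with constant kappa and put theta = 1 - (kappa/4)^n.  The proof has
   three ingredients.

   Every ball of radius rho <= 1 contains a ball of radius kappa rho/4
      on which dist(., S) >= kappa rho/4.  Averaging this local statement over all centres
      (Fubini) shows that the part of {dist(., S) < kappa rho/4} inside a ball has at most
      theta times the measure of the part of {dist(., S) < 2 rho} inside a slightly larger
      ball.  Iterating, for x in S and 0 < r <= 1 the set
      {dist(., S) < 2 r (kappa/8)^k} inside B(x,r) has measure <= theta^k |B(x,3r)|.

   If dist(y,S) lies in the k-th layer then
      |log(1/dist(y,S))|^p <= 2^p log^p(1/r) + 2^p D Q^k with Q = exp(eps p), where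
      eps > 0 is chosen so small that Q theta < 1.

   3. Layer-cake summation.  Integrating the pointwise bound against the layer measures
      gives a convergent geometric series, hence the bound c r^n (1 + log^p(1/r)). *)

lemma emeasure_times_ball_eq_nn_integral:
  fixes A :: "'a::euclidean_space set"
  assumes A: "A \<in> sets lborel" and \<rho>: "0 \<le> \<rho>"
  shows "emeasure lborel A * emeasure lborel (ball (0::'a) \<rho>) =
         (\<integral>\<^sup>+z. emeasure lborel (A \<inter> ball z \<rho>) \<partial>lborel)"
proof -
  define near :: "('a \<times> 'a) set" where "near = {(y, z). dist y z < \<rho>}"
  define f where "f = (\<lambda>y z. indicator A y * indicator near (y, z) :: ennreal)"
  have "open near"
    unfolding near_def case_prod_unfold by (intro open_Collect_less continuous_intros)
  then have "near \<in> sets (lborel \<Otimes>\<^sub>M lborel)"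
    by (simp add: lborel_prod[symmetric]) (subst borel_prod, simp)
  then have meas: "case_prod f \<in> borel_measurable (lborel \<Otimes>\<^sub>M lborel)"
    unfolding f_def using A
    by (auto intro!: borel_measurable_times_ennreal measurable_compose[OF measurable_fst])
  have slice_z: "emeasure lborel (A \<inter> ball z \<rho>) = (\<integral>\<^sup>+y. f y z \<partial>lborel)" for z
  proof -
    have "emeasure lborel (A \<inter> ball z \<rho>) = (\<integral>\<^sup>+y. indicator (A \<inter> ball z \<rho>) y \<partial>lborel)"
      using A by simp
    also have "\<dots> = (\<integral>\<^sup>+y. f y z \<partial>lborel)"
      by (rule nn_integral_cong) (auto simp: f_def near_def indicator_def dist_commute)
    finally show ?thesis .
  qed
  have slice_y: "(\<integral>\<^sup>+z. f y z \<partial>lborel) = emeasure lborel (ball (0::'a) \<rho>) * indicator A y" for y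
  proof -
    have "(\<integral>\<^sup>+z. f y z \<partial>lborel) = (\<integral>\<^sup>+z. indicator A y * indicator (ball y \<rho>) z \<partial>lborel)"
      by (rule nn_integral_cong) (auto simp: f_def near_def indicator_def)
    also have "\<dots> = indicator A y * emeasure lborel (ball y \<rho>)"
      by (simp add: nn_integral_cmult_indicator)
    finally show ?thesis
      using \<rho> by (simp add: emeasure_ball mult.commute)
  qed
  have "(\<integral>\<^sup>+z. emeasure lborel (A \<inter> ball z \<rho>) \<partial>lborel) = (\<integral>\<^sup>+z. (\<integral>\<^sup>+y. f y z \<partial>lborel) \<partial>lborel)"
    by (simp add: slice_z)
  also have "\<dots> = (\<integral>\<^sup>+y. (\<integral>\<^sup>+z. f y z \<partial>lborel) \<partial>lborel)"
    by (rule lborel_pair.Fubini'[OF meas])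
  also have "\<dots> = emeasure lborel (ball (0::'a) \<rho>) * emeasure lborel A"
    using A by (simp add: slice_y nn_integral_cmult_indicator)
  finally show ?thesis by (simp add: mult.commute)
qed

lemma emeasure_le_by_local_density:
  fixes A F :: "'a::euclidean_space set"
  assumes A: "A \<in> sets lborel" and F: "F \<in> sets lborel" and \<rho>: "0 < \<rho>"
    and local: "\<And>z. emeasure lborel (A \<inter> ball z \<rho>)
                  \<le> ennreal t * emeasure lborel (ball (0::'a) \<rho>) * indicator F z"
  shows "emeasure lborel A \<le> ennreal t * emeasure lborel F"
proof -
  let ?B = "emeasure lborel (ball (0::'a) \<rho>)"
  have B: "?B \<noteq> 0" "?B \<noteq> \<infinity>"
    using \<rho> by (simp_all add: emeasure_ball)
      (metis of_nat_0_le_iff unit_ball_vol_pos less_irrefl)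
  have "?B * emeasure lborel A = (\<integral>\<^sup>+z. emeasure lborel (A \<inter> ball z \<rho>) \<partial>lborel)"
    using emeasure_times_ball_eq_nn_integral[OF A] \<rho> by (simp add: mult.commute)
  also have "\<dots> \<le> (\<integral>\<^sup>+z. ennreal t * ?B * indicator F z \<partial>lborel)"
    by (intro nn_integral_mono local)
  also have "\<dots> = ?B * (ennreal t * emeasure lborel F)"
    using F by (subst nn_integral_cmult_indicator) (auto simp: mult_ac)
  finally show ?thesis
    using B by (simp add: ennreal_mult_le_mult_iff)
qed

lemma infdist_ge_if_ball_disjoint:
  fixes S :: "'a::metric_space set"
  assumes "S \<noteq> {}" and "ball w e \<inter> S = {}"
  shows "e \<le> infdist w S"
  unfolding infdist_notempty[OF assms(1)]
proof (rule cINF_greatest)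
  show "S \<noteq> {}" by fact
  fix s assume "s \<in> S"
  then show "e \<le> dist w s" using assms(2) by (auto simp: ball_def not_less[symmetric])
qed

lemma porous_ball_contains_hole:
  fixes S :: "'a::metric_space set"
  assumes porous: "\<And>x r. 0 < r \<Longrightarrow> r \<le> 1 \<Longrightarrow> \<exists>y\<in>ball x r. ball y (\<kappa> * r) \<inter> S = {}"
    and \<kappa>: "0 < \<kappa>" "\<kappa> \<le> 1" and S: "S \<noteq> {}" and \<rho>: "0 < \<rho>" "\<rho> \<le> 1"
  obtains w where "ball w (\<kappa>/4 * \<rho>) \<subseteq> ball z \<rho>"
    and "\<And>u. u \<in> ball w (\<kappa>/4 * \<rho>) \<Longrightarrow> \<kappa>/4 * \<rho> \<le> infdist u S"
proof -
  obtain w where w: "dist z w < \<rho>/2" and hole: "ball w (\<kappa> * (\<rho>/2)) \<inter> S = {}"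
    using porous[of "\<rho>/2" z] \<rho> by auto
  have far: "\<kappa> * (\<rho>/2) \<le> infdist w S"
    by (rule infdist_ge_if_ball_disjoint[OF S hole])
  show ?thesis
  proof
    show "ball w (\<kappa>/4 * \<rho>) \<subseteq> ball z \<rho>"
    proof
      fix u assume "u \<in> ball w (\<kappa>/4 * \<rho>)"
      moreover have "dist z u \<le> dist z w + dist w u" by (rule dist_triangle)
      moreover have "\<kappa>/4 * \<rho> \<le> \<rho>/2" using \<kappa> \<rho> by simp
      ultimately show "u \<in> ball z \<rho>" using w by simp
    qed
  next
    fix u assume "u \<in> ball w (\<kappa>/4 * \<rho>)"
    moreover have "infdist w S \<le> infdist u S + dist w u" by (rule infdist_triangle)
    ultimately show "\<kappa>/4 * \<rho> \<le> infdist u S" using far by simp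
  qed
qed

lemma sets_lborel_infdist_sublevel:
  fixes S :: "'a::euclidean_space set"
  shows "{y. infdist y S < t} \<inter> ball x R \<in> sets lborel"
proof -
  have "open ({y. infdist y S < t} \<inter> ball x R)"
    by (intro open_Int open_Collect_less continuous_intros) auto
  then show ?thesis by simp
qed

lemma porous_local_density:
  fixes S :: "'a::euclidean_space set"
  assumes porous: "\<And>x r. 0 < r \<Longrightarrow> r \<le> 1 \<Longrightarrow> \<exists>y\<in>ball x r. ball y (\<kappa> * r) \<inter> S = {}"
    and \<kappa>: "0 < \<kappa>" "\<kappa> \<le> 1" and S: "S \<noteq> {}" and \<rho>: "0 < \<rho>" "\<rho> \<le> 1"
  shows "emeasure lborel ({y. infdist y S < \<kappa>/4 * \<rho>} \<inter> ball z \<rho>)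
     \<le> ennreal (1 - (\<kappa>/4) ^ DIM('a)) * emeasure lborel (ball (0::'a) \<rho>)"
proof -
  define h where "h = \<kappa>/4"
  define V where "V = unit_ball_vol DIM('a)"
  have h: "0 < h" "h \<le> 1" using \<kappa> by (auto simp: h_def)
  have V: "0 < V" by (simp add: V_def)
  obtain w where sub: "ball w (h * \<rho>) \<subseteq> ball z \<rho>"
    and far: "\<And>u. u \<in> ball w (h * \<rho>) \<Longrightarrow> h * \<rho> \<le> infdist u S"
    using porous_ball_contains_hole[OF porous \<kappa> S \<rho>] unfolding h_def by blast
  have "{y. infdist y S < h * \<rho>} \<inter> ball z \<rho> \<subseteq> ball z \<rho> - ball w (h * \<rho>)"
    using far by fastforce
  then have "emeasure lborel ({y. infdist y S < h * \<rho>} \<inter> ball z \<rho>)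
      \<le> emeasure lborel (ball z \<rho> - ball w (h * \<rho>))"
    by (rule emeasure_mono) simp
  also have "\<dots> = emeasure lborel (ball z \<rho>) - emeasure lborel (ball w (h * \<rho>))"
    using sub h \<rho> by (intro emeasure_Diff) (simp_all add: emeasure_ball)
  also have "\<dots> = ennreal (V * \<rho> ^ DIM('a)) - ennreal (V * (h * \<rho>) ^ DIM('a))"
    using h \<rho> by (simp add: emeasure_ball V_def)
  also have "\<dots> = ennreal ((1 - h ^ DIM('a)) * (V * \<rho> ^ DIM('a)))"
    using h \<rho> V by (subst ennreal_minus) (auto simp: power_mult_distrib algebra_simps)
  also have "\<dots> = ennreal (1 - h ^ DIM('a)) * emeasure lborel (ball (0::'a) \<rho>)"
    using h \<rho> V by (simp add: emeasure_ball V_def ennreal_mult power_le_one)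
  finally show ?thesis by (simp add: h_def)
qed

(* Points near S at
   scale kappa rho/4 only see rho-balls centred in the larger set F. *)
lemma porous_density_decay:
  fixes S :: "'a::euclidean_space set"
  assumes porous: "\<And>x r. 0 < r \<Longrightarrow> r \<le> 1 \<Longrightarrow> \<exists>y\<in>ball x r. ball y (\<kappa> * r) \<inter> S = {}"
    and \<kappa>: "0 < \<kappa>" "\<kappa> \<le> 1" and S: "S \<noteq> {}" and \<rho>: "0 < \<rho>" "\<rho> \<le> 1"
  shows "emeasure lborel ({y. infdist y S < \<kappa>/4 * \<rho>} \<inter> ball x R)
     \<le> ennreal (1 - (\<kappa>/4) ^ DIM('a)) * emeasure lborel ({y. infdist y S < 2 * \<rho>} \<inter> ball x (R + \<rho>))"
proof -
  define A where "A = {y. infdist y S < \<kappa>/4 * \<rho>} \<inter> ball x R"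
  define F where "F = {y. infdist y S < 2 * \<rho>} \<inter> ball x (R + \<rho>)"
  have sets: "A \<in> sets lborel" "F \<in> sets lborel"
    unfolding A_def F_def by (rule sets_lborel_infdist_sublevel)+
  have "emeasure lborel A \<le> ennreal (1 - (\<kappa>/4) ^ DIM('a)) * emeasure lborel F"
  proof (rule emeasure_le_by_local_density[OF sets \<rho>(1)])
    fix z :: 'a
    show "emeasure lborel (A \<inter> ball z \<rho>)
      \<le> ennreal (1 - (\<kappa>/4) ^ DIM('a)) * emeasure lborel (ball (0::'a) \<rho>) * indicator F z"
    proof (cases "z \<in> F")
      case False
      have "A \<inter> ball z \<rho> = {}"
      proof (rule ccontr)
        assume "A \<inter> ball z \<rho> \<noteq> {}"
        then obtain u where u: "u \<in> A" "dist z u < \<rho>" by auto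
        have "infdist z S \<le> infdist u S + dist z u" by (rule infdist_triangle)
        moreover have "dist z x \<le> dist z u + dist u x" by (rule dist_triangle)
        moreover have "\<kappa>/4 * \<rho> \<le> \<rho>" using \<kappa> \<rho> by simp
        ultimately have "z \<in> F" using u by (auto simp: A_def F_def dist_commute)
        with False show False by simp
      qed
      then show ?thesis by simp
    next
      case True
      have "emeasure lborel (A \<inter> ball z \<rho>)
          \<le> emeasure lborel ({y. infdist y S < \<kappa>/4 * \<rho>} \<inter> ball z \<rho>)"
        by (rule emeasure_mono[OF _ sets_lborel_infdist_sublevel]) (auto simp: A_def)
      also have "\<dots> \<le> ennreal (1 - (\<kappa>/4) ^ DIM('a)) * emeasure lborel (ball (0::'a) \<rho>)"
        by (rule porous_local_density[OF porous \<kappa> S \<rho>])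
      finally show ?thesis using True by simp
    qed
  qed
  then show ?thesis by (simp add: A_def F_def)
qed

(* Iterated density decay: the k-th distance layer {dist(., S) < 2 r (kappa/8)^k} inside
   B(x,R) has measure at most theta^k |B(x,3r)|; the radius R shrinks along the
   induction, which is why it is a parameter. *)
lemma porous_sublevel_decay:
  fixes S :: "'a::euclidean_space set"
  assumes porous: "\<And>x r. 0 < r \<Longrightarrow> r \<le> 1 \<Longrightarrow> \<exists>y\<in>ball x r. ball y (\<kappa> * r) \<inter> S = {}"
    and \<kappa>: "0 < \<kappa>" "\<kappa> \<le> 1" and S: "S \<noteq> {}" and r: "0 < r" "r \<le> 1"
    and R: "R \<le> r + 2 * r * (\<kappa>/8) ^ m"
  shows "emeasure lborel ({y. infdist y S < 2 * r * (\<kappa>/8) ^ m} \<inter> ball x R)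
     \<le> ennreal ((1 - (\<kappa>/4) ^ DIM('a)) ^ m) * emeasure lborel (ball x (3 * r))"
  using R
proof (induction m arbitrary: R)
  case 0
  then have "{y. infdist y S < 2 * r * (\<kappa>/8) ^ 0} \<inter> ball x R \<subseteq> ball x (3 * r)"
    by auto
  then show ?case by (simp add: emeasure_mono)
next
  case (Suc m)
  define \<rho> where "\<rho> = r * (\<kappa>/8) ^ m"
  have \<rho>: "0 < \<rho>" "\<rho> \<le> 1"
    unfolding \<rho>_def using \<kappa> r by (auto intro!: mult_le_one power_le_one)
  have \<theta>: "0 \<le> 1 - (\<kappa>/4) ^ DIM('a)"
    using \<kappa> by (auto intro!: power_le_one)
  have radius: "2 * r * (\<kappa>/8) ^ Suc m = \<kappa>/4 * \<rho>" "2 * r * (\<kappa>/8) ^ m = 2 * \<rho>"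
    by (simp_all add: \<rho>_def)
  have "\<kappa>/4 * \<rho> \<le> \<rho>" using \<kappa> \<rho> by simp
  then have "R + \<rho> \<le> r + 2 * r * (\<kappa>/8) ^ m"
    using Suc.prems unfolding radius by linarith
  then have IH: "emeasure lborel ({y. infdist y S < 2 * \<rho>} \<inter> ball x (R + \<rho>))
     \<le> ennreal ((1 - (\<kappa>/4) ^ DIM('a)) ^ m) * emeasure lborel (ball x (3 * r))"
    using Suc.IH by (simp add: radius)
  have "emeasure lborel ({y. infdist y S < 2 * r * (\<kappa>/8) ^ Suc m} \<inter> ball x R)
      \<le> ennreal (1 - (\<kappa>/4) ^ DIM('a)) * emeasure lborel ({y. infdist y S < 2 * \<rho>} \<inter> ball x (R + \<rho>))"
    unfolding radius by (rule porous_density_decay[OF porous \<kappa> S \<rho>])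
  also have "\<dots> \<le> ennreal (1 - (\<kappa>/4) ^ DIM('a)) *
      (ennreal ((1 - (\<kappa>/4) ^ DIM('a)) ^ m) * emeasure lborel (ball x (3 * r)))"
    by (rule mult_left_mono[OF IH]) simp
  also have "\<dots> = ennreal ((1 - (\<kappa>/4) ^ DIM('a)) ^ Suc m) * emeasure lborel (ball x (3 * r))"
    using \<theta> by (simp add: ennreal_mult' mult.assoc)
  finally show ?case .
qed

lemma powr_add_le_two_powr:
  fixes u v p :: real
  assumes "0 \<le> u" "0 \<le> v" "0 \<le> p"
  shows "(u + v) powr p \<le> 2 powr p * (u powr p + v powr p)"
proof -
  have "(u + v) powr p \<le> (2 * max u v) powr p"
    using assms by (intro powr_mono2) auto
  also have "\<dots> = 2 powr p * max u v powr p"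
    using assms by (simp add: powr_mult)
  also have "\<dots> \<le> 2 powr p * (u powr p + v powr p)"
    by (intro mult_left_mono) (auto simp: max_def)
  finally show ?thesis .
qed

lemma succ_le_exp_div:
  fixes \<epsilon> :: real
  assumes "0 < \<epsilon>" "\<epsilon> \<le> 1"
  shows "real k + 1 \<le> exp (\<epsilon> * real k) / \<epsilon>"
proof -
  have "(real k + 1) * \<epsilon> \<le> 1 + \<epsilon> * real k"
    using assms by (simp add: algebra_simps)
  also have "\<dots> \<le> exp (\<epsilon> * real k)"
    by (rule exp_ge_add_one_self)
  finally show ?thesis
    using assms by (simp add: pos_le_divide_eq)
qed

lemma ln_inverse_layer_bound:
  fixes d r a \<epsilon> p :: real
  assumes d: "0 \<le> d" "d < r" and r: "r \<le> 1" and a: "0 < a" "a < 1"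
    and \<epsilon>: "0 < \<epsilon>" "\<epsilon> \<le> 1" and p: "0 \<le> p"
  shows "\<exists>k. d \<le> r * a ^ k \<and> \<bar>ln (1 / d)\<bar> powr p
           \<le> 2 powr p * ln (1 / r) powr p + 2 powr p * ((ln (1 / a) / \<epsilon>) powr p * exp (\<epsilon> * p) ^ k)"
proof (cases "d = 0")
  case True
  then show ?thesis using d by (intro exI[of _ 0]) simp
next
  case False
  define L where "L = ln (1 / a)"
  define u where "u = ln (1 / r)"
  define v where "v = ln (r / d)"
  define k where "k = nat \<lfloor>v / L\<rfloor>" \<comment> \<open>the layer index: \<open>k L \<le> log (r/d) < (k + 1) L\<close>\<close>
  have d_pos: "0 < d" using d False by simp
  have L: "0 < L" using a by (simp add: L_def)
  have u: "0 \<le> u" using d r by (simp add: u_def)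
  have v: "0 < v" using d_pos d by (simp add: v_def)
  have ln_d: "\<bar>ln (1 / d)\<bar> = u + v"
    using d_pos d u v by (simp add: u_def v_def ln_div)
  have "real k \<le> v / L" "v / L < real k + 1"
    using v L by (simp_all add: k_def)
  then have kL: "real k * L \<le> v" "v \<le> (real k + 1) * L"
    using L by (simp_all add: pos_le_divide_eq pos_divide_less_eq less_imp_le)
  have "d = r * exp (- v)"
    using d_pos d by (simp add: v_def exp_minus exp_ln)
  also have "\<dots> \<le> r * exp (- (real k * L))"
    using kL d by (intro mult_left_mono) auto
  also have "exp (- (real k * L)) = a ^ k"
    using a by (simp add: L_def ln_div exp_of_nat_mult)
  finally have layer: "d \<le> r * a ^ k" .
  have "v powr p \<le> ((real k + 1) * L) powr p"
    using kL v p by (intro powr_mono2) auto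
  also have "\<dots> \<le> (exp (\<epsilon> * real k) / \<epsilon> * L) powr p"
    using succ_le_exp_div[OF \<epsilon>, of k] L p by (intro powr_mono2 mult_right_mono) auto
  also have "\<dots> = exp (\<epsilon> * real k) powr p * (L / \<epsilon>) powr p"
    using L \<epsilon> by (simp add: powr_mult[symmetric])
  also have "\<dots> = (L / \<epsilon>) powr p * exp (\<epsilon> * p) ^ k"
    by (simp add: exp_powr_real exp_of_nat_mult[symmetric] algebra_simps)
  finally have v_bound: "v powr p \<le> (L / \<epsilon>) powr p * exp (\<epsilon> * p) ^ k" .
  have "\<bar>ln (1 / d)\<bar> powr p \<le> 2 powr p * (u powr p + v powr p)"
    unfolding ln_d using u v p by (intro powr_add_le_two_powr) auto
  also have "\<dots> \<le> 2 powr p * u powr p + 2 powr p * ((L / \<epsilon>) powr p * exp (\<epsilon> * p) ^ k)"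
    using mult_left_mono[OF v_bound, of "2 powr p"] by (simp add: distrib_left)
  finally show ?thesis
    using layer by (auto simp: u_def L_def)
qed

(* Choice of the growth rate: the pointwise bound may grow geometrically, as long as its
   ratio exp(eps p) stays below 1/theta. *)
lemma exists_exp_rate:
  fixes \<theta> p :: real
  assumes \<theta>: "0 < \<theta>" "\<theta> < 1" and p: "0 < p"
  obtains \<epsilon> where "0 < \<epsilon>" "\<epsilon> \<le> 1" "exp (\<epsilon> * p) * \<theta> < 1"
proof
  define \<epsilon> where "\<epsilon> = min 1 (- ln \<theta> / (2 * p))"
  have ln_\<theta>: "ln \<theta> < 0" using \<theta> by simp
  show "0 < \<epsilon>" "\<epsilon> \<le> 1"
    using ln_\<theta> p by (auto simp: \<epsilon>_def divide_neg_pos)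
  have "\<epsilon> * p \<le> - ln \<theta> / 2"
    using p ln_\<theta> by (auto simp: \<epsilon>_def min_def field_simps)
  then have "exp (\<epsilon> * p + ln \<theta>) < 1"
    using ln_\<theta> by simp
  then show "exp (\<epsilon> * p) * \<theta> < 1"
    using \<theta> by (simp add: exp_add)
qed

lemma nn_integral_le_layers:
  fixes f :: "'a \<Rightarrow> ennreal" and c :: "nat \<Rightarrow> ennreal"
  assumes E: "E \<in> sets M" and A: "\<And>k. A k \<in> sets M"
    and bound: "\<And>y. y \<in> E \<Longrightarrow> f y \<le> b + (\<Sum>k. c k * indicator (A k) y)"
  shows "(\<integral>\<^sup>+y\<in>E. f y \<partial>M) \<le> b * emeasure M E + (\<Sum>k. c k * emeasure M (A k))"
proof -
  have "f y * indicator E y \<le> b * indicator E y + (\<Sum>k. c k * indicator (A k) y)" for y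
    using bound[of y] by (cases "y \<in> E") auto
  then have "(\<integral>\<^sup>+y\<in>E. f y \<partial>M) \<le> (\<integral>\<^sup>+y. b * indicator E y + (\<Sum>k. c k * indicator (A k) y) \<partial>M)"
    by (intro nn_integral_mono)
  also have "\<dots> = (\<integral>\<^sup>+y. b * indicator E y \<partial>M) + (\<integral>\<^sup>+y. (\<Sum>k. c k * indicator (A k) y) \<partial>M)"
    using E A by (intro nn_integral_add borel_measurable_suminf_order) auto
  also have "\<dots> = b * emeasure M E + (\<Sum>k. c k * emeasure M (A k))"
    using E A by (simp add: nn_integral_suminf nn_integral_cmult_indicator)
  finally show ?thesis .
qed

lemma suminf_weighted_geometric_le:
  fixes m :: "nat \<Rightarrow> ennreal" and D M \<theta> Q :: real
  assumes m: "\<And>k. m k \<le> ennreal (M * \<theta> ^ k)"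
    and nonneg: "0 \<le> D" "0 \<le> M" "0 \<le> \<theta>" "0 \<le> Q" and rate: "Q * \<theta> < 1"
  shows "(\<Sum>k. ennreal (D * Q ^ k) * m k) \<le> ennreal (D * M / (1 - Q * \<theta>))"
proof -
  have "(\<Sum>k. ennreal (D * Q ^ k) * m k) \<le> (\<Sum>k. ennreal (D * M * (Q * \<theta>) ^ k))"
  proof (intro suminf_le summableI)
    fix k
    have "ennreal (D * Q ^ k) * m k \<le> ennreal (D * Q ^ k) * ennreal (M * \<theta> ^ k)"
      by (intro mult_left_mono m) simp
    also have "\<dots> = ennreal (D * M * (Q * \<theta>) ^ k)"
      using nonneg by (simp add: ennreal_mult'[symmetric] power_mult_distrib mult_ac)
    finally show "ennreal (D * Q ^ k) * m k \<le> ennreal (D * M * (Q * \<theta>) ^ k)" .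
  qed
  also have "\<dots> = ennreal (\<Sum>k. D * M * (Q * \<theta>) ^ k)"
    using nonneg rate by (intro suminf_ennreal2 summable_mult summable_geometric) auto
  also have "(\<Sum>k. D * M * (Q * \<theta>) ^ k) = D * M / (1 - Q * \<theta>)"
    using nonneg rate by (simp add: suminf_mult suminf_geometric summable_geometric)
  finally show ?thesis .
qed

lemma nn_integral_geometric_layers:
  fixes f :: "'a \<Rightarrow> real" and A :: "nat \<Rightarrow> 'a set"
  assumes E: "E \<in> sets M" "emeasure M E \<le> ennreal m"
    and A: "\<And>k. A k \<in> sets M" "\<And>k. emeasure M (A k) \<le> ennreal (m' * \<theta> ^ k)"
    and bound: "\<And>y. y \<in> E \<Longrightarrow> \<exists>k. y \<in> A k \<and> f y \<le> b + c * Q ^ k"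
    and nonneg: "0 \<le> b" "0 \<le> c" "0 \<le> m" "0 \<le> m'" "0 \<le> \<theta>" "0 \<le> Q" and rate: "Q * \<theta> < 1"
  shows "(\<integral>\<^sup>+y\<in>E. ennreal (f y) \<partial>M) \<le> ennreal (b * m + c * m' / (1 - Q * \<theta>))"
proof -
  have pointwise: "ennreal (f y) \<le> ennreal b + (\<Sum>k. ennreal (c * Q ^ k) * indicator (A k) y)"
    if y: "y \<in> E" for y
  proof -
    obtain k where k: "y \<in> A k" "f y \<le> b + c * Q ^ k"
      using bound[OF y] by blast
    have "ennreal (f y) \<le> ennreal b + ennreal (c * Q ^ k)"
      using k(2) nonneg by (simp add: ennreal_plus[symmetric] ennreal_leI del: ennreal_plus)
    also have "ennreal (c * Q ^ k) \<le> (\<Sum>k. ennreal (c * Q ^ k) * indicator (A k) y)"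
      using sum_le_suminf[of "\<lambda>k. ennreal (c * Q ^ k) * indicator (A k) y" "{k}"] k(1)
      by (simp add: summableI)
    finally show ?thesis by simp
  qed
  have "(\<integral>\<^sup>+y\<in>E. ennreal (f y) \<partial>M) \<le> ennreal b * emeasure M E + (\<Sum>k. ennreal (c * Q ^ k) * emeasure M (A k))"
    by (rule nn_integral_le_layers[OF E(1) A(1) pointwise])
  also have "\<dots> \<le> ennreal b * ennreal m + ennreal (c * m' / (1 - Q * \<theta>))"
    using A(2) nonneg rate
    by (intro add_mono mult_left_mono E(2) suminf_weighted_geometric_le) auto
  also have "\<dots> = ennreal (b * m + c * m' / (1 - Q * \<theta>))"
    using nonneg rate by (simp add: ennreal_mult'[symmetric] ennreal_plus)
  finally show ?thesis .
qed

lemma add_le_mult_one_plus: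
  fixes X Y w :: real
  assumes "0 \<le> X" "0 \<le> Y" "0 \<le> w"
  shows "X * w + X * Y \<le> X * (1 + Y) * (1 + w)"
proof -
  have "X * (1 + Y) * (1 + w) = X * w + X * Y + (X + X * Y * w)"
    by (simp add: algebra_simps)
  moreover have "0 \<le> X + X * Y * w"
    using assms by simp
  ultimately show ?thesis by linarith
qed

lemma porous_log_integral_estimate:
  fixes S :: "'a::euclidean_space set" and \<kappa> p \<epsilon> :: real
  defines "\<theta> \<equiv> 1 - (\<kappa>/4) ^ DIM('a)"
  assumes porous: "\<And>x r. 0 < r \<Longrightarrow> r \<le> 1 \<Longrightarrow> \<exists>y\<in>ball x r. ball y (\<kappa> * r) \<inter> S = {}"
    and \<kappa>: "0 < \<kappa>" "\<kappa> \<le> 1" and x: "x \<in> S" and r: "0 < r" "r \<le> 1" and p: "0 \<le> p"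
    and \<epsilon>: "0 < \<epsilon>" "\<epsilon> \<le> 1" and rate: "exp (\<epsilon> * p) * \<theta> < 1"
  shows "(\<integral>\<^sup>+ y \<in> ball x r. ennreal (\<bar>ln (1 / infdist y S)\<bar> powr p) \<partial>lebesgue)
    \<le> ennreal (2 powr p * unit_ball_vol DIM('a)
          * (1 + 3 ^ DIM('a) * (ln (8 / \<kappa>) / \<epsilon>) powr p / (1 - exp (\<epsilon> * p) * \<theta>))
          * r ^ DIM('a) * (1 + ln (1 / r) powr p))"
proof -
  define n where "n = DIM('a)"
  define V where "V = unit_ball_vol n"
  define Q where "Q = exp (\<epsilon> * p)"
  define D where "D = (ln (8 / \<kappa>) / \<epsilon>) powr p"
  define u where "u = ln (1 / r)"
  define A where "A = (\<lambda>k. {y. infdist y S < 2 * r * (\<kappa>/8) ^ k} \<inter> ball x r)"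
  define X where "X = 2 powr p * V * r ^ n"
  define Y where "Y = 3 ^ n * D / (1 - Q * \<theta>)"
  have S: "S \<noteq> {}" using x by auto
  have V: "0 < V" by (simp add: V_def)
  have \<theta>: "0 \<le> \<theta>" using \<kappa> by (auto simp: \<theta>_def intro!: power_le_one)
  have A_sets: "A k \<in> sets lborel" for k
    unfolding A_def by (rule sets_lborel_infdist_sublevel)
  have A_measure: "emeasure lborel (A k) \<le> ennreal ((3 * r) ^ n * V * \<theta> ^ k)" for k
  proof -
    have R: "r \<le> r + 2 * r * (\<kappa>/8) ^ k" using r \<kappa> by simp
    have "emeasure lborel (A k) \<le> ennreal (\<theta> ^ k) * emeasure lborel (ball x (3 * r))"
      unfolding A_def \<theta>_def by (rule porous_sublevel_decay[OF porous \<kappa> S r R])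
    also have "\<dots> = ennreal ((3 * r) ^ n * V * \<theta> ^ k)"
      using r \<theta> by (simp add: emeasure_ball n_def V_def ennreal_mult'[symmetric] mult_ac)
    finally show ?thesis .
  qed
  have layer: "\<exists>k. y \<in> A k \<and> \<bar>ln (1 / infdist y S)\<bar> powr p \<le> 2 powr p * u powr p + 2 powr p * D * Q ^ k"
    if y: "y \<in> ball x r" for y
  proof -
    have "infdist y S < r"
      using infdist_le[OF x, of y] y by (simp add: dist_commute)
    moreover have "0 < \<kappa>/8" "\<kappa>/8 < 1" using \<kappa> by auto
    ultimately obtain k where near: "infdist y S \<le> r * (\<kappa>/8) ^ k"
      and "\<bar>ln (1 / infdist y S)\<bar> powr p \<le> 2 powr p * ln (1 / r) powr p
             + 2 powr p * ((ln (1 / (\<kappa>/8)) / \<epsilon>) powr p * exp (\<epsilon> * p) ^ k)"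
      using ln_inverse_layer_bound[OF infdist_nonneg _ r(2) _ _ \<epsilon> p] by blast
    moreover have "0 < r * (\<kappa>/8) ^ k" using r \<kappa> by simp
    ultimately show ?thesis
      using y by (intro exI[of _ k]) (simp add: A_def u_def D_def Q_def mult.assoc)
  qed
  have "(\<integral>\<^sup>+ y \<in> ball x r. ennreal (\<bar>ln (1 / infdist y S)\<bar> powr p) \<partial>lebesgue)
      = (\<integral>\<^sup>+ y \<in> ball x r. ennreal (\<bar>ln (1 / infdist y S)\<bar> powr p) \<partial>lborel)"
    by (rule nn_integral_completion)
  also have "\<dots> \<le> ennreal (2 powr p * u powr p * (V * r ^ n)
      + 2 powr p * D * ((3 * r) ^ n * V) / (1 - Q * \<theta>))"
    by (rule nn_integral_geometric_layers[OF _ _ A_sets A_measure layer])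
      (use r V \<theta> rate in \<open>simp_all add: emeasure_ball n_def V_def D_def Q_def\<close>)
  also have "\<dots> = ennreal (X * u powr p + X * Y)"
    by (simp add: X_def Y_def power_mult_distrib algebra_simps)
  also have "\<dots> \<le> ennreal (X * (1 + Y) * (1 + u powr p))"
    using V r rate by (intro ennreal_leI add_le_mult_one_plus) (auto simp: X_def Y_def D_def Q_def)
  finally show ?thesis by (simp add: X_def Y_def n_def V_def D_def Q_def u_def mult_ac)
qed

theorem lemma2p3:
  fixes S :: "'n::euclidean_space set" and p :: real
  assumes "porous S" and "1 \<le> p"
  shows "\<exists>c::real. \<forall>x\<in>S. \<forall>r. 0 < r \<and> r \<le> 1 \<longrightarrow>
           (\<integral>\<^sup>+ y \<in> ball x r. ennreal (\<bar>ln (1 / infdist y S)\<bar> powr p) \<partial>lebesgue)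
             \<le> ennreal (c * r ^ DIM('n) * (1 + (ln (1 / r)) powr p))"
proof -
  obtain \<kappa> :: real where \<kappa>: "0 < \<kappa>" "\<kappa> \<le> 1"
    and porous: "\<And>x r. 0 < r \<Longrightarrow> r \<le> 1 \<Longrightarrow> \<exists>y\<in>ball x r. ball y (\<kappa> * r) \<inter> S = {}"
    using assms(1) unfolding porous_def by blast
  define \<theta> where "\<theta> = 1 - (\<kappa>/4) ^ DIM('n)"
  have "0 < (\<kappa>/4) ^ DIM('n)" "(\<kappa>/4) ^ DIM('n) < 1"
    using \<kappa> by (auto simp: power_less_one_iff)
  then obtain \<epsilon> where \<epsilon>: "0 < \<epsilon>" "\<epsilon> \<le> 1" and rate: "exp (\<epsilon> * p) * \<theta> < 1"
    using exists_exp_rate[of \<theta> p] assms(2) by (auto simp: \<theta>_def)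
  define C where "C = 2 powr p * unit_ball_vol DIM('n)
    * (1 + 3 ^ DIM('n) * (ln (8 / \<kappa>) / \<epsilon>) powr p / (1 - exp (\<epsilon> * p) * \<theta>))"
  show ?thesis
  proof (intro exI[of _ C] ballI allI impI)
    fix x and r :: real assume "x \<in> S" "0 < r \<and> r \<le> 1"
    then show "(\<integral>\<^sup>+ y \<in> ball x r. ennreal (\<bar>ln (1 / infdist y S)\<bar> powr p) \<partial>lebesgue)
             \<le> ennreal (C * r ^ DIM('n) * (1 + (ln (1 / r)) powr p))"
      using porous_log_integral_estimate[OF porous \<kappa>, of x r p \<epsilon>] \<epsilon> rate assms(2)
      by (simp add: C_def \<theta>_def)
  qed
qed

end
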